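(* Let $\rho\geqslant 2$ be an integer, let $(\mathcal{N}_n)_{n\geqslant 0}$ be Narayana's sequence, and let $\alpha\approx 1.46557$ be the unique real root of $x^3-x^2-1$. Suppose that non-negative integers $n,d_1,d_2,d_3,\ell,m,k$ satisfy $1\leqslant k\leqslant m\leqslant \ell$, $d_1,d_2,d_3\in\{0,1,\ldots,\rho-1\}$, $d_1>0$, and $$\mathcal{N}_n=d_1\frac{\rho^\ell-1}{\rho-1}\rho^{m+k}+d_2\frac{\rho^m-1}{\rho-1}\rho^{k}+d_3\frac{\rho^k-1}{\rho-1}.$$ Then $$(\ell+m+k-1)\log\rho+\log\alpha<n\log\alpha<(\ell+m+k)\log\rho+1.$$
   Context: Narayana's sequence is defined by $\mathcal{N}_0=0$, $\mathcal{N}_1=\mathcal{N}_2=1$ and $\mathcal{N}_n=\mathcal{N}_{n-1}+\mathcal{N}_{n-3}$ for $n\geqslant 3$. The right-hand side of the equation is the number whose base-$\rho$ representation consists of $\ell$ digits $d_1$, then $m$ digits $d_2$, then $k$ digits $d_3$. $\log$ is the natural logarithm. *)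

theory Defs
  imports Complex_Main
begin

fun narayana :: "nat \<Rightarrow> nat" where
  "narayana 0 = 0"
| "narayana (Suc 0) = 1"
| "narayana (Suc (Suc 0)) = 1"
| "narayana (Suc (Suc (Suc n))) = narayana (Suc (Suc n)) + narayana n"

definition narayana_alpha :: real where
  "narayana_alpha = (THE x::real. x ^ 3 - x ^ 2 - 1 = 0)"

end

theory Submission imports Defs begin

text \<open>Narayana's sequence grows like \<alpha>^n: a three-step induction along the recurrence
  \<alpha>^(n+3) = \<alpha>^(n+2) + \<alpha>^n gives N n < \<alpha>^(n-1) for n \<ge> 2 and
  \<alpha>^n \<le> 5/2 * N n for n \<ge> 4, and 5/2 \<le> e. The right-hand side is an (l+m+k)-digit
  base-\<rho> number with nonzero leading digit, so \<rho>^(l+m+k-1) \<le> N n < \<rho>^(l+m+k).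
  Taking logarithms and comparing the two estimates gives both inequalities.\<close>

lemma cubic_root_gt_one:
  fixes x :: real
  assumes "x ^ 3 - x ^ 2 - 1 = 0"
  shows "x > 1"
proof (rule ccontr)
  assume "\<not> x > 1"
  then have "x ^ 2 * (x - 1) \<le> 0" by (simp add: mult_nonneg_nonpos)
  moreover have "x ^ 3 - x ^ 2 = x ^ 2 * (x - 1)" by (simp add: algebra_simps power2_eq_square power3_eq_cube)
  ultimately show False using assms by linarith
qed

lemma cubic_root_unique:
  fixes x y :: real
  assumes x: "x ^ 3 - x ^ 2 - 1 = 0" and y: "y ^ 3 - y ^ 2 - 1 = 0"
  shows "x = y"
proof -
  have "x > 1" "y > 1" using x y by (simp_all add: cubic_root_gt_one)
  then have "x * (x - 1) + y * (y - 1) + x * y > 0"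
    by (smt (verit) mult_pos_pos)
  moreover have "(x - y) * (x * (x - 1) + y * (y - 1) + x * y) = 0"
    using x y by (simp add: algebra_simps power2_eq_square power3_eq_cube)
  ultimately show ?thesis by simp
qed

lemma narayana_alpha_cube_and_bounds:
  shows narayana_alpha_cube: "narayana_alpha ^ 3 = narayana_alpha ^ 2 + 1"
    and narayana_alpha_ge: "1.4655 \<le> narayana_alpha"
    and narayana_alpha_le: "narayana_alpha \<le> 1.4656"
proof -
  define f where "f = (\<lambda>x::real. x ^ 3 - x ^ 2 - 1)"
  have "continuous_on {1.4655..1.4656} f" unfolding f_def by (intro continuous_intros)
  moreover have "f 1.4655 \<le> 0" "0 \<le> f 1.4656"
    unfolding f_def by (simp_all add: power2_eq_square power3_eq_cube)
  ultimately obtain r :: real where r: "1.4655 \<le> r" "r \<le> 1.4656" "r ^ 3 - r ^ 2 - 1 = 0"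
    using IVT'[of f "1.4655" 0 "1.4656"] unfolding f_def by auto
  have "narayana_alpha = r"
    unfolding narayana_alpha_def using r(3) by (blast intro: cubic_root_unique)
  then show "narayana_alpha ^ 3 = narayana_alpha ^ 2 + 1"
    and "1.4655 \<le> narayana_alpha" and "narayana_alpha \<le> 1.4656"
    using r by auto
qed

lemma narayana_alpha_pow_rec: "narayana_alpha ^ (n + 3) = narayana_alpha ^ (n + 2) + narayana_alpha ^ n"
proof -
  have "narayana_alpha ^ (n + 3) = narayana_alpha ^ n * narayana_alpha ^ 3" by (simp add: power_add)
  also have "\<dots> = narayana_alpha ^ n * narayana_alpha ^ 2 + narayana_alpha ^ n"
    unfolding narayana_alpha_cube by (simp add: distrib_left)
  also have "\<dots> = narayana_alpha ^ (n + 2) + narayana_alpha ^ n" by (simp only: power_add)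
  finally show ?thesis .
qed

lemma narayana_rec: "narayana (n + 3) = narayana (n + 2) + narayana n"
  by (simp add: eval_nat_numeral)

lemma nat_three_step_induct [consumes 1, case_names base0 base1 base2 step]:
  fixes b n :: nat
  assumes "b \<le> n"
    and "P b" "P (b + 1)" "P (b + 2)"
    and "\<And>j. b \<le> j \<Longrightarrow> P j \<Longrightarrow> P (j + 1) \<Longrightarrow> P (j + 2) \<Longrightarrow> P (j + 3)"
  shows "P n"
  using assms(1)
proof (induction n rule: less_induct)
  case (less n)
  have "n = b \<or> n = b + 1 \<or> n = b + 2 \<or> (n = (n - 3) + 3 \<and> b \<le> n - 3)"
    using less.prems by arith
  then consider "n = b" | "n = b + 1" | "n = b + 2" | j where "n = j + 3" "b \<le> j"
    by blast
  then show ?case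
    by cases (use assms less.IH in auto)
qed

lemma narayana_less_alpha_pow:
  assumes "2 \<le> n"
  shows "real (narayana n) < narayana_alpha ^ (n - 1)"
  using assms
proof (induction n rule: nat_three_step_induct)
  case base0
  then show ?case using narayana_alpha_ge by (simp add: numeral_2_eq_2)
next
  case base1
  have "1 * 1 < narayana_alpha * narayana_alpha"
    using narayana_alpha_ge by (intro mult_strict_mono) auto
  then show ?case by (simp add: eval_nat_numeral)
next
  case base2
  have "1 * 1 < narayana_alpha * narayana_alpha"
    using narayana_alpha_ge by (intro mult_strict_mono) auto
  then show ?case using narayana_alpha_cube by (simp add: eval_nat_numeral power2_eq_square)
next
  case (step j)
  have "real (narayana (j + 3)) = real (narayana (j + 2)) + real (narayana j)"
    by (simp add: narayana_rec)
  also have "\<dots> < narayana_alpha ^ (j - 1 + 2) + narayana_alpha ^ (j - 1)"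
    using step by (simp add: Suc_diff_le)
  also have "\<dots> = narayana_alpha ^ (j + 3 - 1)"
    using narayana_alpha_pow_rec[of "j - 1"] step.hyps by simp
  finally show ?case .
qed

lemma narayana_alpha_pow_le_narayana:
  assumes "4 \<le> n"
  shows "narayana_alpha ^ n \<le> 5 / 2 * real (narayana n)"
  using assms
proof (induction n rule: nat_three_step_induct)
  case base0
  have "narayana_alpha ^ 4 \<le> 1.4656 ^ 4"
    using narayana_alpha_ge narayana_alpha_le by (intro power_mono) auto
  then show ?case by (simp add: eval_nat_numeral)
next
  case base1
  have "narayana_alpha ^ 5 \<le> 1.4656 ^ 5"
    using narayana_alpha_ge narayana_alpha_le by (intro power_mono) auto
  then show ?case by (simp add: eval_nat_numeral)
next
  case base2
  \<comment> \<open>Nearly tight (\<alpha>^6 \<approx> 9.93): this is why \<alpha> is pinned down to four decimals.\<close>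
  have "narayana_alpha ^ 6 \<le> 1.4656 ^ 6"
    using narayana_alpha_ge narayana_alpha_le by (intro power_mono) auto
  then show ?case by (simp add: eval_nat_numeral)
next
  case (step j)
  have "narayana_alpha ^ (j + 3) = narayana_alpha ^ (j + 2) + narayana_alpha ^ j"
    by (rule narayana_alpha_pow_rec)
  also have "\<dots> \<le> 5 / 2 * (real (narayana (j + 2)) + real (narayana j))"
    using step.IH by simp
  also have "\<dots> = 5 / 2 * real (narayana (j + 3))"
    by (simp add: narayana_rec)
  finally show ?case .
qed

lemma narayana_ln_bounds:
  assumes "4 \<le> n"
  shows "ln (real (narayana n)) < real (n - 1) * ln narayana_alpha"
    and "real n * ln narayana_alpha \<le> ln (real (narayana n)) + 1"
proof -
  have alpha_pos: "narayana_alpha > 0" using narayana_alpha_ge by simp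
  have upper: "real (narayana n) < narayana_alpha ^ (n - 1)"
    using assms by (intro narayana_less_alpha_pow) simp
  have lower: "narayana_alpha ^ n \<le> 5 / 2 * real (narayana n)"
    using assms by (rule narayana_alpha_pow_le_narayana)
  have N_pos: "real (narayana n) > 0"
    using lower zero_less_power[OF alpha_pos, of n] by linarith
  show "ln (real (narayana n)) < real (n - 1) * ln narayana_alpha"
    using upper N_pos alpha_pos by (simp flip: ln_realpow)
  have "5 / 2 \<le> exp (1 :: real)"
    using exp_lower_Taylor_quadratic[of 1] by simp
  then have "narayana_alpha ^ n \<le> exp 1 * real (narayana n)"
    using lower N_pos by (smt (verit) mult_right_mono)
  then have "ln (narayana_alpha ^ n) \<le> ln (exp 1 * real (narayana n))"
    using alpha_pos N_pos by simp
  then show "real n * ln narayana_alpha \<le> ln (real (narayana n)) + 1"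
    using N_pos by (simp add: ln_mult ln_realpow)
qed

lemma narayana_le_one:
  assumes "n \<le> 3"
  shows "narayana n \<le> 1"
proof -
  have "n = 0 \<or> n = 1 \<or> n = 2 \<or> n = 3" using assms by auto
  then show ?thesis by (auto simp: eval_nat_numeral)
qed

lemma repdigit_nonneg:
  fixes R d :: real
  assumes "1 < R" "0 \<le> d"
  shows "0 \<le> d * ((R ^ j - 1) / (R - 1))"
  using assms by (simp add: one_le_power)

lemma repdigit_le:
  fixes R d :: real
  assumes "1 < R" "d \<le> R - 1"
  shows "d * ((R ^ j - 1) / (R - 1)) \<le> R ^ j - 1"
proof -
  have "d * ((R ^ j - 1) / (R - 1)) \<le> (R - 1) * ((R ^ j - 1) / (R - 1))"
    using assms by (intro mult_right_mono) (simp_all add: one_le_power)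
  also have "\<dots> = R ^ j - 1" using assms(1) by simp
  finally show ?thesis .
qed

lemma repdigit_ge:
  fixes R d :: real
  assumes "1 < R" "1 \<le> d" "1 \<le> j"
  shows "R ^ (j - 1) \<le> d * ((R ^ j - 1) / (R - 1))"
proof -
  have "R ^ j = R * R ^ (j - 1)"
    using assms(3) by (simp flip: power_Suc)
  moreover have "1 \<le> R ^ (j - 1)"
    using assms(1) by (simp add: one_le_power)
  ultimately have "R ^ (j - 1) \<le> (R ^ j - 1) / (R - 1)"
    using assms(1) by (simp add: field_simps)
  also have "\<dots> \<le> d * ((R ^ j - 1) / (R - 1))"
    using mult_right_mono[OF assms(2) repdigit_nonneg[OF assms(1), of 1 j]] by simp
  finally show ?thesis .
qed

lemma three_repdigit_blocks_bounds:
  fixes R d1 d2 d3 :: real and l m k :: nat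
  assumes R: "1 < R"
    and d1: "1 \<le> d1" "d1 \<le> R - 1"
    and d2: "0 \<le> d2" "d2 \<le> R - 1"
    and d3: "0 \<le> d3" "d3 \<le> R - 1"
    and l: "1 \<le> l"
  defines "x \<equiv> d1 * ((R ^ l - 1) / (R - 1)) * R ^ (m + k)
              + d2 * ((R ^ m - 1) / (R - 1)) * R ^ k + d3 * ((R ^ k - 1) / (R - 1))"
  shows "R ^ (l + m + k - 1) \<le> x" and "x < R ^ (l + m + k)"
proof -
  have R_pow_pos: "0 < R ^ i" for i using R by simp
  have "R ^ (l + m + k - 1) = R ^ (l - 1) * R ^ (m + k)"
  proof -
    have "l + m + k - 1 = (l - 1) + (m + k)" using l by simp
    then show ?thesis by (simp only: power_add)
  qed
  also have "\<dots> \<le> d1 * ((R ^ l - 1) / (R - 1)) * R ^ (m + k)"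
    using repdigit_ge[OF R d1(1) l] R_pow_pos by (intro mult_right_mono) (simp_all add: less_imp_le)
  also have "\<dots> \<le> x"
    unfolding x_def
    using mult_nonneg_nonneg[OF repdigit_nonneg[OF R d2(1), of m] less_imp_le[OF R_pow_pos[of k]]]
      repdigit_nonneg[OF R d3(1), of k]
    by linarith
  finally show "R ^ (l + m + k - 1) \<le> x" .
  have "x \<le> (R ^ l - 1) * R ^ (m + k) + (R ^ m - 1) * R ^ k + (R ^ k - 1)"
    unfolding x_def using repdigit_le[OF R d1(2), of l] repdigit_le[OF R d2(2), of m]
      repdigit_le[OF R d3(2), of k] R_pow_pos
    by (intro add_mono mult_right_mono) (simp_all add: less_imp_le)
  also have "\<dots> = R ^ (l + m + k) - 1"
    by (simp add: power_add algebra_simps)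
  finally show "x < R ^ (l + m + k)" by simp
qed

theorem lemma3p1:
  fixes \<rho> n d1 d2 d3 l m k :: nat
  assumes "\<rho> \<ge> 2"
    and "1 \<le> k" and "k \<le> m" and "m \<le> l"
    and "d1 < \<rho>" and "d2 < \<rho>" and "d3 < \<rho>" and "d1 > 0"
    and "real (narayana n) =
           real d1 * ((real \<rho> ^ l - 1) / (real \<rho> - 1)) * real \<rho> ^ (m + k)
         + real d2 * ((real \<rho> ^ m - 1) / (real \<rho> - 1)) * real \<rho> ^ k
         + real d3 * ((real \<rho> ^ k - 1) / (real \<rho> - 1))"
  shows "real (l + m + k - 1) * ln (real \<rho>) + ln narayana_alpha < real n * ln narayana_alpha
       \<and> real n * ln narayana_alpha < real (l + m + k) * ln (real \<rho>) + 1"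
proof -
  define L where "L = l + m + k"
  have R: "1 < real \<rho>" using assms(1) by simp
  have N_lower: "real \<rho> ^ (L - 1) \<le> real (narayana n)"
    and N_upper: "real (narayana n) < real \<rho> ^ L"
    using three_repdigit_blocks_bounds[OF R, of "real d1" "real d2" "real d3" l m k] assms
    unfolding L_def by (simp_all add: of_nat_diff)
  have "(4 :: real) = 2 ^ 2" by simp
  also have "\<dots> \<le> real \<rho> ^ 2" using assms(1) by (intro power_mono) auto
  also have "\<dots> \<le> real \<rho> ^ (L - 1)"
    using assms(2-4) R unfolding L_def by (intro power_increasing) auto
  also note N_lower
  finally have "4 \<le> real (narayana n)" .
  then have "4 \<le> n"
    using narayana_le_one[of n] by (cases "n \<le> 3") auto
  have "ln (real \<rho> ^ (L - 1)) \<le> ln (real (narayana n))"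
    using N_lower R by (intro ln_mono) simp_all
  moreover have "ln (real (narayana n)) < ln (real \<rho> ^ L)"
    using N_upper \<open>4 \<le> real (narayana n)\<close> by (intro ln_strict_mono) simp_all
  ultimately show ?thesis
    using narayana_ln_bounds[OF \<open>4 \<le> n\<close>] \<open>4 \<le> n\<close> unfolding L_def
    by (simp add: ln_realpow of_nat_diff algebra_simps)
qed

end
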